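(* For all $u^l\in\mathcal E^l_{T,\pm}$ and $u^r\in\mathcal E^r_{T,\pm}$, $$\|u^l+u^r\|^2_{\dot{\mathcal E}_{T,\pm}}=\|u^l\|^2_{\dot{\mathcal E}_{T,\pm}}+\|u^r\|^2_{\dot{\mathcal E}_{T,\pm}}.$$
   Context: Let $\Lambda>0,M>0,a\in\mathbb R$, $\Delta_r=(1-\frac13\Lambda r^2)(r^2+a^2)-2Mr$, positive on $(r_-,r_+)$ with $0<r_-<r_+$ simple roots, $\lambda=1+\frac13\Lambda a^2$; $x$ the Regge–Wheeler coordinate ($dx/dr=\lambda(r^2+a^2)/\Delta_r$), $r=r(x)$. Fix $n\in\mathbb Z$, $\mathcal Y^n=\ker(D_\phi-n)\subset L^2(\mathbb R_x\times\mathbb S^2)$. $l(x)=\frac{an}{a^2+r(x)^2}$, $l_\pm=\frac{an}{a^2+r_\pm^2}$, $w_+=\partial_x+il$, $w_-=-\partial_x+il$, $\tilde w_-=-\partial_x-il+2il_+$, $\tilde w_+=\partial_x-il+2il_-$. $h_{0,T,+}=-(\partial_x+i(l-l_+))^2$, $h_{0,T,-}=-(-\partial_x+i(l-l_-))^2$ (nonnegative selfadjoint, maximal domains). $\dot{\mathcal E}_{T,\pm}$ is the completion of $\mathrm{Dom}(h_{0,T,\pm}^{1/2})\oplus L^2$ for $\|u\|^2=\|u_1+l_\pm u_0\|^2+\langle h_{0,T,\pm}u_0,u_0\rangle$; $\dot{\mathcal E}^n_{T,\pm}$ is the closure of its $\mathcal Y^n$-valued part. With the maps $u\mapsto\frac{w}{i}u_0+u_1$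 extended continuously to $L^2$: $\mathcal E^r_{T,+}=\{u\in\dot{\mathcal E}^n_{T,+}:\frac{w_+}iu_0+u_1=0\}$, $\mathcal E^l_{T,+}=\{u\in\dot{\mathcal E}^n_{T,+}:\frac{\tilde w_-}iu_0+u_1=0\}$, $\mathcal E^r_{T,-}=\{u\in\dot{\mathcal E}^n_{T,-}:\frac{\tilde w_+}iu_0+u_1=0\}$, $\mathcal E^l_{T,-}=\{u\in\dot{\mathcal E}^n_{T,-}:\frac{w_-}iu_0+u_1=0\}$. *)

theory Defs
  imports "HOL-Analysis.Analysis"
begin

definition Delta_r :: "real \<Rightarrow> real \<Rightarrow> real \<Rightarrow> real \<Rightarrow> real" where
  "Delta_r Lam M a \<rho> = (1 - Lam * \<rho>\<^sup>2 / 3) * (\<rho>\<^sup>2 + a\<^sup>2) - 2 * M * \<rho>"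

definition lam_const :: "real \<Rightarrow> real \<Rightarrow> real" where
  "lam_const Lam a = 1 + Lam * a\<^sup>2 / 3"

text \<open>Standing assumptions; the Regge--Wheeler coordinate is encoded through its inverse
  r = r(x), a bijection of the real line onto (r_-, r_+) with dr/dx = Delta_r / (lambda (r^2+a^2)).\<close>
definition KdS_setting ::
  "real \<Rightarrow> real \<Rightarrow> real \<Rightarrow> real \<Rightarrow> real \<Rightarrow> (real \<Rightarrow> real) \<Rightarrow> bool" where
  "KdS_setting Lam M a rm rp r \<longleftrightarrow>
     Lam > 0 \<and> M > 0 \<and> 0 < rm \<and> rm < rp \<and>
     Delta_r Lam M a rm = 0 \<and> Delta_r Lam M a rp = 0 \<and>
     deriv (Delta_r Lam M a) rm \<noteq> 0 \<and> deriv (Delta_r Lam M a) rp \<noteq> 0 \<and>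
     (\<forall>\<rho>\<in>{rm<..<rp}. Delta_r Lam M a \<rho> > 0) \<and>
     bij_betw r UNIV {rm<..<rp} \<and>
     (\<forall>x. (r has_real_derivative
            Delta_r Lam M a (r x) / (lam_const Lam a * ((r x)\<^sup>2 + a\<^sup>2))) (at x))"

definition ell :: "real \<Rightarrow> int \<Rightarrow> real \<Rightarrow> real" where
  "ell a n \<rho> = a * real_of_int n / (a\<^sup>2 + \<rho>\<^sup>2)"

section \<open>L^2(R_x \<times> S^2) in coordinates (x, theta, phi)\<close>

type_synonym cfun = "real \<times> real \<times> real \<Rightarrow> complex"
type_synonym pre = "cfun \<times> cfun \<times> cfun"  \<comment> \<open>(u0, d_x u0, u1)\<close>

definition mu :: "(real \<times> real \<times> real) measure" where
  "mu = density lborel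
     (\<lambda>p. indicator ({0<..<pi} \<times> {0<..<2*pi}) (snd p) * ennreal (sin (fst (snd p))))"

definition L2 :: "cfun set" where
  "L2 = {f. f \<in> borel_measurable mu \<and> (\<integral>\<^sup>+ p. ennreal ((cmod (f p))\<^sup>2) \<partial>mu) < \<infinity>}"

definition L2norm :: "cfun \<Rightarrow> real" where
  "L2norm f = sqrt (enn2real (\<integral>\<^sup>+ p. ennreal ((cmod (f p))\<^sup>2) \<partial>mu))"

text \<open>Y^n = ker(D_phi - n), D_phi = -i d/dphi: functions e^{i n phi} v(x, theta).\<close>
definition Yn :: "int \<Rightarrow> cfun set" where
  "Yn n = {f \<in> L2. \<exists>v. AE p in mu. f p = cis (real_of_int n * snd (snd p)) * v (fst p, fst (snd p))}"

definition test_fun :: "cfun \<Rightarrow> cfun \<Rightarrow> bool" where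
  "test_fun \<psi> d\<psi> \<longleftrightarrow> continuous_on UNIV \<psi> \<and> continuous_on UNIV d\<psi> \<and>
     (\<forall>x \<theta> \<phi>. ((\<lambda>s. \<psi> (s, \<theta>, \<phi>)) has_vector_derivative d\<psi> (x, \<theta>, \<phi>)) (at x)) \<and>
     compact (closure {p. \<psi> p \<noteq> 0}) \<and>
     closure {p. \<psi> p \<noteq> 0} \<subseteq> UNIV \<times> ({0<..<pi} \<times> {0<..<2*pi})"

definition weak_dx :: "cfun \<Rightarrow> cfun \<Rightarrow> bool" where
  "weak_dx u g \<longleftrightarrow> (\<forall>\<psi> d\<psi>. test_fun \<psi> d\<psi> \<longrightarrow>
      integral\<^sup>L mu (\<lambda>p. u p * d\<psi> p) = - integral\<^sup>L mu (\<lambda>p. g p * \<psi> p))"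

section \<open>Y^n-valued elements of Dom(h^{1/2}) \<oplus> L^2 and the energy norms\<close>

definition preE :: "int \<Rightarrow> pre set" where
  "preE n = {(u0, du0, u1). u0 \<in> Yn n \<and> u1 \<in> Yn n \<and> du0 \<in> L2 \<and> weak_dx u0 du0}"

definition addP :: "pre \<Rightarrow> pre \<Rightarrow> pre" where
  "addP U V = (case U of (u0, du0, u1) \<Rightarrow> case V of (v0, dv0, v1) \<Rightarrow>
      (\<lambda>p. u0 p + v0 p, \<lambda>p. du0 p + dv0 p, \<lambda>p. u1 p + v1 p))"

definition subP :: "pre \<Rightarrow> pre \<Rightarrow> pre" where
  "subP U V = (case U of (u0, du0, u1) \<Rightarrow> case V of (v0, dv0, v1) \<Rightarrow>
      (\<lambda>p. u0 p - v0 p, \<lambda>p. du0 p - dv0 p, \<lambda>p. u1 p - v1 p))"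

text \<open>Energy norm of dot-E_{T,+}: ||u1 + l_+ u0||^2 + <h_{0,T,+} u0, u0>, where
  <h u0,u0> = ||(d_x + i(l - l_+)) u0||^2 (form of h = A^* A, A = d_x + i(l-l_+)).\<close>
definition energyTp :: "real \<Rightarrow> int \<Rightarrow> (real \<Rightarrow> real) \<Rightarrow> real \<Rightarrow> pre \<Rightarrow> real" where
  "energyTp a n r rp U = (case U of (u0, du0, u1) \<Rightarrow>
     sqrt ((L2norm (\<lambda>p. u1 p + complex_of_real (ell a n rp) * u0 p))\<^sup>2 +
           (L2norm (\<lambda>p. du0 p + \<i> * complex_of_real (ell a n (r (fst p)) - ell a n rp) * u0 p))\<^sup>2))"

definition energyTm :: "real \<Rightarrow> int \<Rightarrow> (real \<Rightarrow> real) \<Rightarrow> real \<Rightarrow> pre \<Rightarrow> real" where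
  "energyTm a n r rm U = (case U of (u0, du0, u1) \<Rightarrow>
     sqrt ((L2norm (\<lambda>p. u1 p + complex_of_real (ell a n rm) * u0 p))\<^sup>2 +
           (L2norm (\<lambda>p. - du0 p + \<i> * complex_of_real (ell a n (r (fst p)) - ell a n rm) * u0 p))\<^sup>2))"

text \<open>The maps u \<mapsto> (w/i) u0 + u1 on pre-elements, for the four vector fields.\<close>
definition map_w :: "(real \<Rightarrow> complex) \<Rightarrow> complex \<Rightarrow> pre \<Rightarrow> cfun" where
  "map_w c s U = (case U of (u0, du0, u1) \<Rightarrow>
     (\<lambda>p. (s * du0 p + c (fst p) * u0 p) / \<i> + u1 p))"
  \<comment> \<open>w = s d_x + c(x), s = \<plusminus>1\<close>

definition w_plus where "w_plus a n r = map_w (\<lambda>x. \<i> * ell a n (r x)) 1"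
definition w_minus where "w_minus a n r = map_w (\<lambda>x. \<i> * ell a n (r x)) (-1)"
definition tw_minus where
  "tw_minus a n r rp = map_w (\<lambda>x. - \<i> * ell a n (r x) + 2 * \<i> * ell a n rp) (-1)"
definition tw_plus where
  "tw_plus a n r rm = map_w (\<lambda>x. - \<i> * ell a n (r x) + 2 * \<i> * ell a n rm) 1"

definition cauchy_E :: "(pre \<Rightarrow> real) \<Rightarrow> (nat \<Rightarrow> pre) \<Rightarrow> bool" where
  "cauchy_E E U \<longleftrightarrow> (\<forall>e>0. \<exists>N. \<forall>m\<ge>N. \<forall>k\<ge>N. E (subP (U m) (U k)) < e)"

text \<open>Representatives (Cauchy sequences of Y^n-valued pre-elements) of elements of the closed
  subspace of dot-E^n_T on which the continuous extension of the map F vanishes.\<close>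
definition seq_rep :: "int \<Rightarrow> (pre \<Rightarrow> real) \<Rightarrow> (pre \<Rightarrow> cfun) \<Rightarrow> (nat \<Rightarrow> pre) set" where
  "seq_rep n E F = {U. (\<forall>k. U k \<in> preE n) \<and> cauchy_E E U \<and>
                        (\<lambda>k. L2norm (F (U k))) \<longlonglongrightarrow> 0}"

definition norm_completion :: "(pre \<Rightarrow> real) \<Rightarrow> (nat \<Rightarrow> pre) \<Rightarrow> real" where
  "norm_completion E U = lim (\<lambda>k. E (U k))"

end

theory Submission
  imports Defs
begin

(*
  In the components A = u1 + l_c u0 and B = (sigma d_x + i (l - l_c)) u0 (c = r_+, sigma = 1 for
  the T,+ spaces and c = r_-, sigma = -1 for the T,- spaces) the energy norm is the norm of (A, B)
  in L^2 (+) L^2, and the defining conditions of the left and right subspaces become A - s B = 0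
  and A + s B = 0 with s = -i resp. s = i. For exact solutions of these conditions the cross term
  Re <A, C> + Re <B, D> = Re <s B, -s D> + Re <B, D> vanishes because |s| = 1. Along Cauchy
  sequences the conditions only hold in the limit; by Cauchy-Schwarz the cross term is then at
  most ||B|| ||C + s D|| + ||A - s B|| ||C||, which tends to 0 since the energies stay bounded.
*)

section \<open>Square-integrable functions\<close>

definition sq_integrable :: "'a measure \<Rightarrow> ('a \<Rightarrow> complex) \<Rightarrow> bool" where
  "sq_integrable M f \<longleftrightarrow> f \<in> borel_measurable M \<and> integrable M (\<lambda>x. (cmod (f x))\<^sup>2)"

lemma borel_measurable_cnj [measurable]:
  "f \<in> borel_measurable M \<Longrightarrow> (\<lambda>x. cnj (f x)) \<in> borel_measurable M"
  by (rule borel_measurable_continuous_on[where f = cnj]) (intro continuous_on_cnj continuous_on_id)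

lemma sq_integrable_mult_bounded:
  assumes f: "sq_integrable M f" and c: "c \<in> borel_measurable M" and bound: "\<And>x. cmod (c x) \<le> K"
  shows "sq_integrable M (\<lambda>x. c x * f x)"
  unfolding sq_integrable_def
proof (intro conjI)
  have [measurable]: "f \<in> borel_measurable M" using f by (simp add: sq_integrable_def)
  note c[measurable]
  show "(\<lambda>x. c x * f x) \<in> borel_measurable M" by measurable
  show "integrable M (\<lambda>x. (cmod (c x * f x))\<^sup>2)"
  proof (rule Bochner_Integration.integrable_bound)
    show "integrable M (\<lambda>x. K\<^sup>2 * (cmod (f x))\<^sup>2)" using f by (simp add: sq_integrable_def)
    show "(\<lambda>x. (cmod (c x * f x))\<^sup>2) \<in> borel_measurable M" by measurable
    have "(cmod (c x * f x))\<^sup>2 \<le> K\<^sup>2 * (cmod (f x))\<^sup>2" for x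
      using bound[of x] by (simp add: norm_mult power_mult_distrib mult_right_mono power_mono)
    then show "AE x in M. norm ((cmod (c x * f x))\<^sup>2) \<le> norm (K\<^sup>2 * (cmod (f x))\<^sup>2)"
      by simp
  qed
qed

lemma sq_integrable_cmult: "sq_integrable M f \<Longrightarrow> sq_integrable M (\<lambda>x. c * f x)"
  by (rule sq_integrable_mult_bounded[where K = "cmod c"]) auto

lemma sq_integrable_add:
  assumes f: "sq_integrable M f" and g: "sq_integrable M g"
  shows "sq_integrable M (\<lambda>x. f x + g x)"
  unfolding sq_integrable_def
proof (intro conjI)
  have [measurable]: "f \<in> borel_measurable M" "g \<in> borel_measurable M"
    using f g by (simp_all add: sq_integrable_def)
  show "(\<lambda>x. f x + g x) \<in> borel_measurable M" by measurable
  show "integrable M (\<lambda>x. (cmod (f x + g x))\<^sup>2)"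
  proof (rule Bochner_Integration.integrable_bound)
    show "integrable M (\<lambda>x. 2 * (cmod (f x))\<^sup>2 + 2 * (cmod (g x))\<^sup>2)"
      using f g by (simp add: sq_integrable_def)
    show "(\<lambda>x. (cmod (f x + g x))\<^sup>2) \<in> borel_measurable M" by measurable
    have "(cmod (f x + g x))\<^sup>2 \<le> 2 * (cmod (f x))\<^sup>2 + 2 * (cmod (g x))\<^sup>2" for x
    proof -
      have "(cmod (f x + g x))\<^sup>2 \<le> (cmod (f x) + cmod (g x))\<^sup>2"
        by (simp add: norm_triangle_ineq power_mono)
      also have "\<dots> \<le> 2 * (cmod (f x))\<^sup>2 + 2 * (cmod (g x))\<^sup>2"
        using sum_squares_bound[of "cmod (f x)" "cmod (g x)"] by (simp add: power2_sum)
      finally show ?thesis .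
    qed
    then show "AE x in M. norm ((cmod (f x + g x))\<^sup>2) \<le> norm (2 * (cmod (f x))\<^sup>2 + 2 * (cmod (g x))\<^sup>2)"
      by simp
  qed
qed

lemma sq_integrable_diff: "sq_integrable M f \<Longrightarrow> sq_integrable M g \<Longrightarrow> sq_integrable M (\<lambda>x. f x - g x)"
  using sq_integrable_add[of M f "\<lambda>x. (-1) * g x"] sq_integrable_cmult[of M g "-1"] by simp

lemma integrable_norm_mult:
  assumes f: "sq_integrable M f" and g: "sq_integrable M g"
  shows "integrable M (\<lambda>x. cmod (f x) * cmod (g x))"
proof (rule Bochner_Integration.integrable_bound)
  show "integrable M (\<lambda>x. (cmod (f x))\<^sup>2 + (cmod (g x))\<^sup>2)"
    using f g by (simp add: sq_integrable_def)
  have [measurable]: "f \<in> borel_measurable M" "g \<in> borel_measurable M"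
    using f g by (simp_all add: sq_integrable_def)
  show "(\<lambda>x. cmod (f x) * cmod (g x)) \<in> borel_measurable M" by measurable
  have "cmod (f x) * cmod (g x) \<le> (cmod (f x))\<^sup>2 + (cmod (g x))\<^sup>2" for x
    using sum_squares_bound[of "cmod (f x)" "cmod (g x)"] mult_nonneg_nonneg[OF norm_ge_zero norm_ge_zero, of "f x" "g x"]
    by linarith
  then show "AE x in M. norm (cmod (f x) * cmod (g x)) \<le> norm ((cmod (f x))\<^sup>2 + (cmod (g x))\<^sup>2)"
    by simp
qed

lemma integrable_Re_mult_cnj:
  assumes f: "sq_integrable M f" and g: "sq_integrable M g"
  shows "integrable M (\<lambda>x. Re (f x * cnj (g x)))"
proof (rule Bochner_Integration.integrable_bound[OF integrable_norm_mult[OF f g]])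
  have [measurable]: "f \<in> borel_measurable M" "g \<in> borel_measurable M"
    using f g by (simp_all add: sq_integrable_def)
  show "(\<lambda>x. Re (f x * cnj (g x))) \<in> borel_measurable M" by measurable
  have "\<bar>Re (f x * cnj (g x))\<bar> \<le> cmod (f x) * cmod (g x)" for x
    using abs_Re_le_cmod[of "f x * cnj (g x)"] by (simp only: norm_mult complex_mod_cnj)
  then show "AE x in M. norm (Re (f x * cnj (g x))) \<le> norm (cmod (f x) * cmod (g x))"
    by simp
qed

lemma integral_norm_mult_le:
  assumes f: "sq_integrable M f" and g: "sq_integrable M g"
  shows "(\<integral>x. cmod (f x) * cmod (g x) \<partial>M) \<le>
         sqrt (\<integral>x. (cmod (f x))\<^sup>2 \<partial>M) * sqrt (\<integral>x. (cmod (g x))\<^sup>2 \<partial>M)"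
proof -
  have [measurable]: "f \<in> borel_measurable M" "g \<in> borel_measurable M"
    using f g by (simp_all add: sq_integrable_def)
  have nn: "(\<integral>\<^sup>+x. ennreal (h x) \<partial>M) = ennreal (\<integral>x. h x \<partial>M)"
    if "integrable M h" "\<And>x. 0 \<le> h x" for h
    using that by (intro nn_integral_eq_integral) auto
  have mult: "(\<integral>\<^sup>+x. ennreal (cmod (f x)) * ennreal (cmod (g x)) \<partial>M) =
      ennreal (\<integral>x. cmod (f x) * cmod (g x) \<partial>M)"
    by (simp add: nn integrable_norm_mult[OF f g] flip: ennreal_mult)
  have square: "(\<integral>\<^sup>+x. ennreal (cmod (h x)) ^ 2 \<partial>M) = ennreal (\<integral>x. (cmod (h x))\<^sup>2 \<partial>M)"
    if "sq_integrable M h" for h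
    using that by (simp add: nn ennreal_power sq_integrable_def)
  have "(\<integral>\<^sup>+x. ennreal (cmod (f x)) * ennreal (cmod (g x)) \<partial>M)\<^sup>2 \<le>
        (\<integral>\<^sup>+x. ennreal (cmod (f x)) ^ 2 \<partial>M) * (\<integral>\<^sup>+x. ennreal (cmod (g x)) ^ 2 \<partial>M)"
    by (rule Cauchy_Schwarz_nn_integral) auto
  then have "(\<integral>x. cmod (f x) * cmod (g x) \<partial>M)\<^sup>2 \<le>
        (\<integral>x. (cmod (f x))\<^sup>2 \<partial>M) * (\<integral>x. (cmod (g x))\<^sup>2 \<partial>M)"
    unfolding mult square[OF f] square[OF g]
    by (simp add: ennreal_power ennreal_mult integral_nonneg_AE flip: ennreal_mult)
  then show ?thesis
    by (simp add: real_le_rsqrt flip: real_sqrt_mult)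
qed

lemma integral_norm_add_square:
  assumes f: "sq_integrable M f" and g: "sq_integrable M g"
  shows "(\<integral>x. (cmod (f x + g x))\<^sup>2 \<partial>M) =
    (\<integral>x. (cmod (f x))\<^sup>2 \<partial>M) + (\<integral>x. (cmod (g x))\<^sup>2 \<partial>M) + 2 * (\<integral>x. Re (f x * cnj (g x)) \<partial>M)"
proof -
  have i: "integrable M (\<lambda>x. (cmod (f x))\<^sup>2)" "integrable M (\<lambda>x. (cmod (g x))\<^sup>2)"
    using f g by (simp_all add: sq_integrable_def)
  have "(cmod (f x + g x))\<^sup>2 = ((cmod (f x))\<^sup>2 + (cmod (g x))\<^sup>2) + 2 * Re (f x * cnj (g x))" for x
    by (simp add: cmod_power2 power2_sum algebra_simps)
  then have "(\<integral>x. (cmod (f x + g x))\<^sup>2 \<partial>M) =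
      (\<integral>x. ((cmod (f x))\<^sup>2 + (cmod (g x))\<^sup>2) + 2 * Re (f x * cnj (g x)) \<partial>M)"
    by presburger
  also have "\<dots> = (\<integral>x. (cmod (f x))\<^sup>2 + (cmod (g x))\<^sup>2 \<partial>M) + (\<integral>x. 2 * Re (f x * cnj (g x)) \<partial>M)"
    by (intro Bochner_Integration.integral_add Bochner_Integration.integrable_add
        integrable_mult_right integrable_Re_mult_cnj f g i)
  also have "(\<integral>x. (cmod (f x))\<^sup>2 + (cmod (g x))\<^sup>2 \<partial>M) =
      (\<integral>x. (cmod (f x))\<^sup>2 \<partial>M) + (\<integral>x. (cmod (g x))\<^sup>2 \<partial>M)"
    by (rule Bochner_Integration.integral_add[OF i])
  also have "(\<integral>x. 2 * Re (f x * cnj (g x)) \<partial>M) = 2 * (\<integral>x. Re (f x * cnj (g x)) \<partial>M)"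
    by (rule integral_mult_right_zero)
  finally show ?thesis .
qed

lemma L2norm_nonneg: "L2norm f \<ge> 0"
  by (simp add: L2norm_def)

lemma L2norm_eq_sqrt_integral:
  "sq_integrable mu f \<Longrightarrow> L2norm f = sqrt (\<integral>p. (cmod (f p))\<^sup>2 \<partial>mu)"
  unfolding L2norm_def sq_integrable_def by (subst integral_eq_nn_integral) auto

lemma L2norm_square: "sq_integrable mu f \<Longrightarrow> (L2norm f)\<^sup>2 = (\<integral>p. (cmod (f p))\<^sup>2 \<partial>mu)"
  by (simp add: L2norm_eq_sqrt_integral integral_nonneg_AE)

lemma integral_norm_mult_le_L2norm:
  "sq_integrable mu f \<Longrightarrow> sq_integrable mu g \<Longrightarrow>
    (\<integral>p. cmod (f p) * cmod (g p) \<partial>mu) \<le> L2norm f * L2norm g"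
  by (simp add: L2norm_eq_sqrt_integral integral_norm_mult_le)

lemma L2norm_add_square:
  assumes f: "sq_integrable mu f" and g: "sq_integrable mu g"
  shows "(L2norm (\<lambda>p. f p + g p))\<^sup>2 =
    (L2norm f)\<^sup>2 + (L2norm g)\<^sup>2 + 2 * (\<integral>p. Re (f p * cnj (g p)) \<partial>mu)"
  using f g sq_integrable_add[OF f g] by (simp add: L2norm_square integral_norm_add_square)

lemma L2norm_triangle:
  assumes f: "sq_integrable mu f" and g: "sq_integrable mu g"
  shows "L2norm (\<lambda>p. f p + g p) \<le> L2norm f + L2norm g"
proof -
  have "(\<integral>p. Re (f p * cnj (g p)) \<partial>mu) \<le> (\<integral>p. cmod (f p) * cmod (g p) \<partial>mu)"
    by (intro integral_mono integrable_Re_mult_cnj integrable_norm_mult f g)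
      (metis complex_Re_le_cmod complex_mod_cnj norm_mult)
  also have "\<dots> \<le> L2norm f * L2norm g"
    by (rule integral_norm_mult_le_L2norm[OF f g])
  finally have "(L2norm (\<lambda>p. f p + g p))\<^sup>2 \<le> (L2norm f + L2norm g)\<^sup>2"
    unfolding L2norm_add_square[OF f g] power2_sum by linarith
  then show ?thesis
    using L2norm_nonneg by (simp add: power2_le_iff_abs_le)
qed

lemma L2norm_minus_commute: "L2norm (\<lambda>p. f p - g p) = L2norm (\<lambda>p. g p - f p)"
  by (simp add: L2norm_def norm_minus_commute)

section \<open>The energy norm on L^2 (+) L^2\<close>

definition L2norm_pair :: "cfun \<Rightarrow> cfun \<Rightarrow> real" where
  "L2norm_pair f g = sqrt ((L2norm f)\<^sup>2 + (L2norm g)\<^sup>2)"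

lemma L2norm_pair_nonneg: "L2norm_pair f g \<ge> 0"
  by (simp add: L2norm_pair_def)

lemma L2norm_pair_square: "(L2norm_pair f g)\<^sup>2 = (L2norm f)\<^sup>2 + (L2norm g)\<^sup>2"
  by (simp add: L2norm_pair_def)

lemma L2norm_le_L2norm_pair: "L2norm f \<le> L2norm_pair f g" "L2norm g \<le> L2norm_pair f g"
  by (simp_all add: L2norm_pair_def real_le_rsqrt)

lemma L2norm_pair_triangle:
  assumes "sq_integrable mu f1" "sq_integrable mu f2" "sq_integrable mu g1" "sq_integrable mu g2"
  shows "L2norm_pair (\<lambda>p. f1 p + f2 p) (\<lambda>p. g1 p + g2 p) \<le> L2norm_pair f1 g1 + L2norm_pair f2 g2"
proof -
  have "L2norm_pair (\<lambda>p. f1 p + f2 p) (\<lambda>p. g1 p + g2 p) \<le>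
      norm (L2norm f1 + L2norm f2, L2norm g1 + L2norm g2)"
    unfolding L2norm_pair_def norm_Pair real_norm_def power2_abs
    using assms by (intro real_sqrt_le_mono add_mono power_mono L2norm_triangle) (auto intro: L2norm_nonneg)
  also have "\<dots> = norm ((L2norm f1, L2norm g1) + (L2norm f2, L2norm g2))"
    by simp
  also have "\<dots> \<le> norm (L2norm f1, L2norm g1) + norm (L2norm f2, L2norm g2)"
    by (rule norm_triangle_ineq)
  finally show ?thesis
    by (simp add: L2norm_pair_def norm_Pair)
qed

lemma L2norm_pair_diff_bound:
  assumes "sq_integrable mu f1" "sq_integrable mu f2" "sq_integrable mu g1" "sq_integrable mu g2"
  shows "\<bar>L2norm_pair f1 g1 - L2norm_pair f2 g2\<bar> \<le> L2norm_pair (\<lambda>p. f1 p - f2 p) (\<lambda>p. g1 p - g2 p)"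
  using L2norm_pair_triangle[of "\<lambda>p. f1 p - f2 p" f2 "\<lambda>p. g1 p - g2 p" g2]
    L2norm_pair_triangle[of "\<lambda>p. f2 p - f1 p" f1 "\<lambda>p. g2 p - g1 p" g1]
    L2norm_minus_commute[of f1 f2] L2norm_minus_commute[of g1 g2]
  by (simp add: assms sq_integrable_diff L2norm_pair_def)

lemma convergent_L2norm_pair:
  assumes a: "\<And>k. sq_integrable mu (a k)" and b: "\<And>k. sq_integrable mu (b k)"
    and Cauchy: "\<forall>e>0. \<exists>N. \<forall>m\<ge>N. \<forall>k\<ge>N. L2norm_pair (\<lambda>p. a m p - a k p) (\<lambda>p. b m p - b k p) < e"
  shows "convergent (\<lambda>k. L2norm_pair (a k) (b k))"
  unfolding Cauchy_convergent_iff[symmetric]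
proof (rule metric_CauchyI)
  fix e :: real
  assume "e > 0"
  then obtain N where "\<forall>m\<ge>N. \<forall>k\<ge>N. L2norm_pair (\<lambda>p. a m p - a k p) (\<lambda>p. b m p - b k p) < e"
    using Cauchy by blast
  then show "\<exists>N. \<forall>m\<ge>N. \<forall>k\<ge>N. dist (L2norm_pair (a m) (b m)) (L2norm_pair (a k) (b k)) < e"
    unfolding dist_real_def using L2norm_pair_diff_bound[OF a a b b] by (meson order_le_less_trans)
qed

lemma L2norm_pair_add_square:
  assumes "sq_integrable mu a" "sq_integrable mu b" "sq_integrable mu c" "sq_integrable mu d"
  shows "(L2norm_pair (\<lambda>p. a p + c p) (\<lambda>p. b p + d p))\<^sup>2 =
    (L2norm_pair a b)\<^sup>2 + (L2norm_pair c d)\<^sup>2 +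
    2 * ((\<integral>p. Re (a p * cnj (c p)) \<partial>mu) + (\<integral>p. Re (b p * cnj (d p)) \<partial>mu))"
  using assms by (simp add: L2norm_pair_square L2norm_add_square algebra_simps)

lemma abs_Re_cross_le:
  fixes a b c d s :: complex
  assumes "cmod s = 1"
  shows "\<bar>Re (a * cnj c) + Re (b * cnj d)\<bar> \<le> cmod b * cmod (c + s * d) + cmod (a - s * b) * cmod c"
proof -
  have "s * cnj s = 1"
    using assms by (metis complex_norm_square of_real_1 power_one)
  then have "a * cnj c + b * cnj d = s * b * cnj (c + s * d) + (a - s * b) * cnj c"
    by (simp add: algebra_simps)
  then have "\<bar>Re (a * cnj c) + Re (b * cnj d)\<bar> = \<bar>Re (s * b * cnj (c + s * d) + (a - s * b) * cnj c)\<bar>"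
    by (metis plus_complex.sel(1))
  also have "\<dots> \<le> cmod (s * b * cnj (c + s * d)) + cmod ((a - s * b) * cnj c)"
    by (rule order_trans[OF abs_Re_le_cmod norm_triangle_ineq])
  also have "\<dots> = cmod b * cmod (c + s * d) + cmod (a - s * b) * cmod c"
    by (simp only: norm_mult complex_mod_cnj assms mult_1_left)
  finally show ?thesis .
qed

lemma abs_cross_integral_le:
  assumes s: "cmod s = 1"
    and a: "sq_integrable mu a" and b: "sq_integrable mu b"
    and c: "sq_integrable mu c" and d: "sq_integrable mu d"
  shows "\<bar>(\<integral>p. Re (a p * cnj (c p)) \<partial>mu) + (\<integral>p. Re (b p * cnj (d p)) \<partial>mu)\<bar> \<le>
    L2norm b * L2norm (\<lambda>p. c p + s * d p) + L2norm (\<lambda>p. a p - s * b p) * L2norm c"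
proof -
  define F where "F = (\<lambda>p. a p - s * b p)"
  define G where "G = (\<lambda>p. c p + s * d p)"
  have F: "sq_integrable mu F" and G: "sq_integrable mu G"
    unfolding F_def G_def by (intro sq_integrable_diff sq_integrable_add sq_integrable_cmult a b c d)+
  have "(\<integral>p. Re (a p * cnj (c p)) \<partial>mu) + (\<integral>p. Re (b p * cnj (d p)) \<partial>mu) =
      (\<integral>p. Re (a p * cnj (c p)) + Re (b p * cnj (d p)) \<partial>mu)"
    by (intro Bochner_Integration.integral_add[symmetric] integrable_Re_mult_cnj a b c d)
  also have "\<bar>\<dots>\<bar> \<le> (\<integral>p. cmod (b p) * cmod (G p) + cmod (F p) * cmod (c p) \<partial>mu)"
    unfolding F_def G_def
    by (intro integral_abs_bound_integral abs_Re_cross_le[OF s] Bochner_Integration.integrable_add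
        integrable_Re_mult_cnj integrable_norm_mult a b c d F[unfolded F_def] G[unfolded G_def])
  also have "\<dots> = (\<integral>p. cmod (b p) * cmod (G p) \<partial>mu) + (\<integral>p. cmod (F p) * cmod (c p) \<partial>mu)"
    by (intro Bochner_Integration.integral_add integrable_norm_mult b c F G)
  also have "\<dots> \<le> L2norm b * L2norm G + L2norm F * L2norm c"
    by (intro add_mono integral_norm_mult_le_L2norm b c F G)
  finally show ?thesis
    unfolding F_def G_def .
qed

lemma L2norm_pair_add_square_tendsto:
  assumes s: "cmod s = 1"
    and a: "\<And>k. sq_integrable mu (a k)" and b: "\<And>k. sq_integrable mu (b k)"
    and c: "\<And>k. sq_integrable mu (c k)" and d: "\<And>k. sq_integrable mu (d k)"
    and ab: "(\<lambda>k. L2norm_pair (a k) (b k)) \<longlonglongrightarrow> A"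
    and cd: "(\<lambda>k. L2norm_pair (c k) (d k)) \<longlonglongrightarrow> C"
    and F: "(\<lambda>k. L2norm (\<lambda>p. a k p - s * b k p)) \<longlonglongrightarrow> 0"
    and G: "(\<lambda>k. L2norm (\<lambda>p. c k p + s * d k p)) \<longlonglongrightarrow> 0"
  shows "(\<lambda>k. (L2norm_pair (\<lambda>p. a k p + c k p) (\<lambda>p. b k p + d k p))\<^sup>2) \<longlonglongrightarrow> A\<^sup>2 + C\<^sup>2"
proof -
  define X where "X k = (\<integral>p. Re (a k p * cnj (c k p)) \<partial>mu) + (\<integral>p. Re (b k p * cnj (d k p)) \<partial>mu)" for k
  obtain Kab where Kab: "\<And>k. norm (L2norm_pair (a k) (b k)) \<le> Kab"
    using convergent_imp_Bseq[OF convergentI[OF ab]] by (auto simp: Bseq_def)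
  obtain Kcd where Kcd: "\<And>k. norm (L2norm_pair (c k) (d k)) \<le> Kcd"
    using convergent_imp_Bseq[OF convergentI[OF cd]] by (auto simp: Bseq_def)
  define B where "B k = Kab * L2norm (\<lambda>p. c k p + s * d k p) + L2norm (\<lambda>p. a k p - s * b k p) * Kcd" for k
  have "\<forall>k. norm (X k) \<le> B k"
  proof
    fix k
    have "L2norm (b k) \<le> Kab" "L2norm (c k) \<le> Kcd"
      using L2norm_le_L2norm_pair(2)[of "b k" "a k"] L2norm_le_L2norm_pair(1)[of "c k" "d k"]
        Kab[of k] Kcd[of k]
      by (simp_all add: L2norm_pair_nonneg)
    then have "L2norm (b k) * L2norm (\<lambda>p. c k p + s * d k p) + L2norm (\<lambda>p. a k p - s * b k p) * L2norm (c k) \<le>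
        Kab * L2norm (\<lambda>p. c k p + s * d k p) + L2norm (\<lambda>p. a k p - s * b k p) * Kcd"
      by (intro add_mono mult_right_mono mult_left_mono L2norm_nonneg)
    then show "norm (X k) \<le> B k"
      unfolding X_def B_def real_norm_def using abs_cross_integral_le[OF s a b c d, of k k k k] by linarith
  qed
  moreover have "B \<longlonglongrightarrow> 0"
    unfolding B_def using tendsto_add[OF tendsto_mult_right_zero[OF G] tendsto_mult_left_zero[OF F]] by simp
  ultimately have "X \<longlonglongrightarrow> 0"
    by (rule Lim_null_comparison[OF always_eventually])
  then have "(\<lambda>k. (L2norm_pair (a k) (b k))\<^sup>2 + (L2norm_pair (c k) (d k))\<^sup>2 + 2 * X k) \<longlonglongrightarrow> A\<^sup>2 + C\<^sup>2 + 2 * 0"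
    by (intro tendsto_add tendsto_mult tendsto_power tendsto_const ab cd)
  then show ?thesis
    by (simp add: L2norm_pair_add_square[OF a b c d] X_def)
qed

lemma norm_completion_add_square:
  fixes A B :: "pre \<Rightarrow> cfun" and s :: complex
  defines "E \<equiv> \<lambda>U. L2norm_pair (A U) (B U)"
  assumes s: "cmod s = 1"
    and A_add: "\<And>U V. A (addP U V) = (\<lambda>p. A U p + A V p)"
    and A_sub: "\<And>U V. A (subP U V) = (\<lambda>p. A U p - A V p)"
    and B_add: "\<And>U V. B (addP U V) = (\<lambda>p. B U p + B V p)"
    and B_sub: "\<And>U V. B (subP U V) = (\<lambda>p. B U p - B V p)"
    and A_sq: "\<And>U. U \<in> preE n \<Longrightarrow> sq_integrable mu (A U)"
    and B_sq: "\<And>U. U \<in> preE n \<Longrightarrow> sq_integrable mu (B U)"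
    and Ul: "Ul \<in> seq_rep n E (\<lambda>U p. A U p - s * B U p)"
    and Ur: "Ur \<in> seq_rep n E (\<lambda>U p. A U p + s * B U p)"
  shows "(norm_completion E (\<lambda>k. addP (Ul k) (Ur k)))\<^sup>2 =
    (norm_completion E Ul)\<^sup>2 + (norm_completion E Ur)\<^sup>2"
proof -
  have convergent: "convergent (\<lambda>k. E (U k))" if "U \<in> seq_rep n E F" for U F
  proof -
    have "\<And>k. U k \<in> preE n" "cauchy_E E U"
      using that by (simp_all add: seq_rep_def)
    then show ?thesis
      unfolding E_def cauchy_E_def A_sub B_sub
      by (intro convergent_L2norm_pair A_sq B_sq) auto
  qed
  have preE: "\<And>k. Ul k \<in> preE n" "\<And>k. Ur k \<in> preE n"
    using Ul Ur by (simp_all add: seq_rep_def)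
  have "(\<lambda>k. (E (addP (Ul k) (Ur k)))\<^sup>2) \<longlonglongrightarrow> (norm_completion E Ul)\<^sup>2 + (norm_completion E Ur)\<^sup>2"
    unfolding E_def A_add B_add norm_completion_def
  proof (rule L2norm_pair_add_square_tendsto[OF s])
    show "(\<lambda>k. L2norm (\<lambda>p. A (Ul k) p - s * B (Ul k) p)) \<longlonglongrightarrow> 0"
      "(\<lambda>k. L2norm (\<lambda>p. A (Ur k) p + s * B (Ur k) p)) \<longlonglongrightarrow> 0"
      using Ul Ur by (simp_all add: seq_rep_def)
    show "(\<lambda>k. L2norm_pair (A (Ul k)) (B (Ul k))) \<longlonglongrightarrow> lim (\<lambda>k. L2norm_pair (A (Ul k)) (B (Ul k)))"
      "(\<lambda>k. L2norm_pair (A (Ur k)) (B (Ur k))) \<longlonglongrightarrow> lim (\<lambda>k. L2norm_pair (A (Ur k)) (B (Ur k)))"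
      using convergent[OF Ul] convergent[OF Ur] by (simp_all add: E_def convergent_LIMSEQ_iff)
  qed (use A_sq B_sq preE in auto)
  then have "(\<lambda>k. E (addP (Ul k) (Ur k))) \<longlonglongrightarrow> sqrt ((norm_completion E Ul)\<^sup>2 + (norm_completion E Ur)\<^sup>2)"
    using tendsto_real_sqrt by (fastforce simp: E_def L2norm_pair_nonneg)
  then show ?thesis
    by (simp add: norm_completion_def limI)
qed

section \<open>The Kerr-de Sitter energy components\<close>

definition time_comp :: "real \<Rightarrow> int \<Rightarrow> real \<Rightarrow> pre \<Rightarrow> cfun" where
  "time_comp a n c U = (case U of (u0, du0, u1) \<Rightarrow> \<lambda>p. u1 p + complex_of_real (ell a n c) * u0 p)"

definition space_comp :: "real \<Rightarrow> int \<Rightarrow> (real \<Rightarrow> real) \<Rightarrow> complex \<Rightarrow> real \<Rightarrow> pre \<Rightarrow> cfun" where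
  "space_comp a n r \<sigma> c U = (case U of (u0, du0, u1) \<Rightarrow>
     \<lambda>p. \<sigma> * du0 p + \<i> * complex_of_real (ell a n (r (fst p)) - ell a n c) * u0 p)"

lemma energyTp_eq: "energyTp a n r c = (\<lambda>U. L2norm_pair (time_comp a n c U) (space_comp a n r 1 c U))"
  by (auto simp: fun_eq_iff energyTp_def L2norm_pair_def time_comp_def space_comp_def)

lemma energyTm_eq: "energyTm a n r c = (\<lambda>U. L2norm_pair (time_comp a n c U) (space_comp a n r (-1) c U))"
  by (auto simp: fun_eq_iff energyTm_def L2norm_pair_def time_comp_def space_comp_def)

lemma time_comp_addP: "time_comp a n c (addP U V) = (\<lambda>p. time_comp a n c U p + time_comp a n c V p)"
  by (cases U; cases V) (simp add: addP_def time_comp_def algebra_simps)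

lemma time_comp_subP: "time_comp a n c (subP U V) = (\<lambda>p. time_comp a n c U p - time_comp a n c V p)"
  by (cases U; cases V) (simp add: subP_def time_comp_def algebra_simps)

lemma space_comp_addP:
  "space_comp a n r \<sigma> c (addP U V) = (\<lambda>p. space_comp a n r \<sigma> c U p + space_comp a n r \<sigma> c V p)"
  by (cases U; cases V) (simp add: addP_def space_comp_def algebra_simps)

lemma space_comp_subP:
  "space_comp a n r \<sigma> c (subP U V) = (\<lambda>p. space_comp a n r \<sigma> c U p - space_comp a n r \<sigma> c V p)"
  by (cases U; cases V) (simp add: subP_def space_comp_def algebra_simps)

text \<open>In w_plus_eq and w_minus_eq the constant c is arbitrary: the terms l_c u0 cancel.\<close>

lemma tw_minus_eq: "tw_minus a n r c = (\<lambda>U p. time_comp a n c U p - (- \<i>) * space_comp a n r 1 c U p)"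
  by (auto simp: fun_eq_iff tw_minus_def map_w_def time_comp_def space_comp_def divide_complex_def algebra_simps)

lemma w_plus_eq: "w_plus a n r = (\<lambda>U p. time_comp a n c U p + (- \<i>) * space_comp a n r 1 c U p)"
  by (auto simp: fun_eq_iff w_plus_def map_w_def time_comp_def space_comp_def divide_complex_def algebra_simps)

lemma w_minus_eq: "w_minus a n r = (\<lambda>U p. time_comp a n c U p - \<i> * space_comp a n r (-1) c U p)"
  by (auto simp: fun_eq_iff w_minus_def map_w_def time_comp_def space_comp_def divide_complex_def algebra_simps)

lemma tw_plus_eq: "tw_plus a n r c = (\<lambda>U p. time_comp a n c U p + \<i> * space_comp a n r (-1) c U p)"
  by (auto simp: fun_eq_iff tw_plus_def map_w_def time_comp_def space_comp_def divide_complex_def algebra_simps)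

lemma sq_integrable_L2: "f \<in> L2 \<Longrightarrow> sq_integrable mu f"
  by (auto simp: L2_def sq_integrable_def integrable_iff_bounded)

lemma sq_integrable_preE:
  assumes "(u0, du0, u1) \<in> preE n"
  shows "sq_integrable mu u0" "sq_integrable mu du0" "sq_integrable mu u1"
  using assms by (auto simp: preE_def Yn_def intro: sq_integrable_L2)

lemma borel_measurable_mu_fst:
  assumes "g \<in> borel_measurable borel"
  shows "(\<lambda>p. g (fst p)) \<in> borel_measurable mu"
proof -
  have "(fst :: real \<times> real \<times> real \<Rightarrow> real) \<in> borel_measurable borel"
    by (intro borel_measurable_continuous_onI continuous_intros)
  then show ?thesis
    using measurable_compose assms by (fastforce simp: mu_def)
qed

lemma abs_ell_le: "\<bar>ell a n \<rho>\<bar> \<le> \<bar>a * real_of_int n\<bar> / a\<^sup>2"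
proof (cases "a = 0")
  case False
  then have "0 < a\<^sup>2" "0 < a\<^sup>2 + \<rho>\<^sup>2"
    by (simp_all add: add_pos_nonneg)
  then show ?thesis
    unfolding ell_def abs_divide by (intro divide_left_mono) simp_all
qed (simp add: ell_def)

lemma sq_integrable_time_comp: "U \<in> preE n \<Longrightarrow> sq_integrable mu (time_comp a n c U)"
  by (cases U) (auto simp: time_comp_def dest: sq_integrable_preE intro!: sq_integrable_add sq_integrable_cmult)

lemma sq_integrable_space_comp:
  assumes U: "U \<in> preE n" and r: "r \<in> borel_measurable borel"
  shows "sq_integrable mu (space_comp a n r \<sigma> c U)"
proof -
  have "(\<lambda>p. \<i> * complex_of_real (ell a n (r (fst p)) - ell a n c)) \<in> borel_measurable mu"
    using r by (intro borel_measurable_mu_fst) (simp add: ell_def)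
  moreover have "cmod (\<i> * complex_of_real (ell a n x - ell a n c)) \<le> 2 * (\<bar>a * real_of_int n\<bar> / a\<^sup>2)" for x
  proof -
    have "cmod (\<i> * complex_of_real (ell a n x - ell a n c)) = \<bar>ell a n x - ell a n c\<bar>"
      by (simp only: norm_mult norm_ii norm_of_real mult_1_left)
    then show ?thesis
      using abs_ell_le[of a n x] abs_ell_le[of a n c] by linarith
  qed
  ultimately show ?thesis
    using U by (cases U) (auto simp: space_comp_def dest: sq_integrable_preE
        intro!: sq_integrable_add sq_integrable_cmult sq_integrable_mult_bounded)
qed

lemma KdS_setting_borel_measurable: "KdS_setting Lam M a rm rp r \<Longrightarrow> r \<in> borel_measurable borel"
  unfolding KdS_setting_def
  by (metis DERIV_isCont borel_measurable_continuous_onI continuous_at_imp_continuous_on)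

theorem mainTheorem13:
  fixes Lam M a rm rp :: real and n :: int and r :: "real \<Rightarrow> real"
  assumes "KdS_setting Lam M a rm rp r"
  shows "(\<forall>Ul \<in> seq_rep n (energyTp a n r rp) (tw_minus a n r rp).
          \<forall>Ur \<in> seq_rep n (energyTp a n r rp) (w_plus a n r).
            (norm_completion (energyTp a n r rp) (\<lambda>k. addP (Ul k) (Ur k)))\<^sup>2 =
            (norm_completion (energyTp a n r rp) Ul)\<^sup>2 + (norm_completion (energyTp a n r rp) Ur)\<^sup>2)
       \<and> (\<forall>Ul \<in> seq_rep n (energyTm a n r rm) (w_minus a n r).
          \<forall>Ur \<in> seq_rep n (energyTm a n r rm) (tw_plus a n r rm).
            (norm_completion (energyTm a n r rm) (\<lambda>k. addP (Ul k) (Ur k)))\<^sup>2 =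
            (norm_completion (energyTm a n r rm) Ul)\<^sup>2 + (norm_completion (energyTm a n r rm) Ur)\<^sup>2)"
proof -
  have r: "r \<in> borel_measurable borel"
    using assms by (rule KdS_setting_borel_measurable)
  show ?thesis
  proof (intro conjI ballI)
    fix Ul Ur
    assume "Ul \<in> seq_rep n (energyTp a n r rp) (tw_minus a n r rp)"
      and "Ur \<in> seq_rep n (energyTp a n r rp) (w_plus a n r)"
    then show "(norm_completion (energyTp a n r rp) (\<lambda>k. addP (Ul k) (Ur k)))\<^sup>2 =
        (norm_completion (energyTp a n r rp) Ul)\<^sup>2 + (norm_completion (energyTp a n r rp) Ur)\<^sup>2"
      unfolding energyTp_eq tw_minus_eq w_plus_eq[where c = rp]
      by (intro norm_completion_add_square[where s = "- \<i>"] time_comp_addP time_comp_subP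
          space_comp_addP space_comp_subP sq_integrable_time_comp sq_integrable_space_comp r) simp_all
  next
    fix Ul Ur
    assume "Ul \<in> seq_rep n (energyTm a n r rm) (w_minus a n r)"
      and "Ur \<in> seq_rep n (energyTm a n r rm) (tw_plus a n r rm)"
    then show "(norm_completion (energyTm a n r rm) (\<lambda>k. addP (Ul k) (Ur k)))\<^sup>2 =
        (norm_completion (energyTm a n r rm) Ul)\<^sup>2 + (norm_completion (energyTm a n r rm) Ur)\<^sup>2"
      unfolding energyTm_eq tw_plus_eq w_minus_eq[where c = rm]
      by (intro norm_completion_add_square[where s = \<i>] time_comp_addP time_comp_subP
          space_comp_addP space_comp_subP sq_integrable_time_comp sq_integrable_space_comp r) simp_all
  qed
qed

end
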